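(* Let $n\ge 4$. Let $S_n$ be the star on $n$ vertices and let $S_{n-3,1}$ be the tree on $n$ vertices consisting of a vertex $u$ adjacent to $n-3$ leaves and to one further vertex $w$ of degree $2$ whose other neighbor is a leaf. Then for every tree $T$ on $n$ vertices with $T\not\cong S_n$ and $T\not\cong S_{n-3,1}$, $$\rho_{ABC}(T)<\rho_{ABC}(S_{n-3,1})<\rho_{ABC}(S_n).$$
   Context: For a simple connected graph $G$ with vertex set $\{v_1,\dots,v_n\}$ and degrees $d_i$, the ABC matrix is $M(G)=(m_{ij})_{n\times n}$ with $m_{ij}=\sqrt{(d_i+d_j-2)/(d_id_j)}$ if $v_iv_j$ is an edge and $m_{ij}=0$ otherwise. The ABC spectral radius $\rho_{ABC}(G)$ is the largest eigenvalue of $M(G)$. The tree $S_{n-3,1}$ (a double star) is the unique tree on $n$ vertices with maximum degree $n-2$. *)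

theory Defs
  imports "Jordan_Normal_Form.Char_Poly"
begin

definition simple_graph :: "nat \<Rightarrow> (nat \<Rightarrow> nat \<Rightarrow> bool) \<Rightarrow> bool" where
  "simple_graph n E \<longleftrightarrow>
     (\<forall>i j. E i j \<longrightarrow> i < n \<and> j < n) \<and>
     (\<forall>i j. E i j \<longrightarrow> E j i) \<and> (\<forall>i. \<not> E i i)"

definition graph_edges :: "nat \<Rightarrow> (nat \<Rightarrow> nat \<Rightarrow> bool) \<Rightarrow> (nat \<times> nat) set" where
  "graph_edges n E = {(i, j). i < j \<and> j < n \<and> E i j}"

definition graph_connected :: "nat \<Rightarrow> (nat \<Rightarrow> nat \<Rightarrow> bool) \<Rightarrow> bool" where
  "graph_connected n E \<longleftrightarrow> (\<forall>i<n. \<forall>j<n. E\<^sup>*\<^sup>* i j)"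

definition is_tree :: "nat \<Rightarrow> (nat \<Rightarrow> nat \<Rightarrow> bool) \<Rightarrow> bool" where
  "is_tree n E \<longleftrightarrow> simple_graph n E \<and> graph_connected n E \<and>
     card (graph_edges n E) = n - 1"

definition deg :: "nat \<Rightarrow> (nat \<Rightarrow> nat \<Rightarrow> bool) \<Rightarrow> nat \<Rightarrow> nat" where
  "deg n E i = card {j. j < n \<and> E i j}"

definition graph_iso :: "nat \<Rightarrow> (nat \<Rightarrow> nat \<Rightarrow> bool) \<Rightarrow> (nat \<Rightarrow> nat \<Rightarrow> bool) \<Rightarrow> bool" where
  "graph_iso n E F \<longleftrightarrow> (\<exists>f. bij_betw f {0..<n} {0..<n} \<and>
     (\<forall>i<n. \<forall>j<n. E i j \<longleftrightarrow> F (f i) (f j)))"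

definition abc_matrix :: "nat \<Rightarrow> (nat \<Rightarrow> nat \<Rightarrow> bool) \<Rightarrow> real mat" where
  "abc_matrix n E = mat n n (\<lambda>(i, j).
     if E i j then sqrt ((real (deg n E i) + real (deg n E j) - 2) / (real (deg n E i) * real (deg n E j)))
     else 0)"

definition rho_abc :: "nat \<Rightarrow> (nat \<Rightarrow> nat \<Rightarrow> bool) \<Rightarrow> real" where
  "rho_abc n E = Max {k. eigenvalue (abc_matrix n E) k}"

definition star_graph :: "nat \<Rightarrow> nat \<Rightarrow> nat \<Rightarrow> bool" where
  "star_graph n i j \<longleftrightarrow> i < n \<and> j < n \<and> i \<noteq> j \<and> (i = 0 \<or> j = 0)"

text \<open>S_{n-3,1}: u = 0 adjacent to w = 1 and to leaves 2..n-2; w adjacent to leaf n-1.\<close>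
definition double_star_graph :: "nat \<Rightarrow> nat \<Rightarrow> nat \<Rightarrow> bool" where
  "double_star_graph n i j \<longleftrightarrow>
     (i = 0 \<and> 1 \<le> j \<and> j \<le> n - 2) \<or> (j = 0 \<and> 1 \<le> i \<and> i \<le> n - 2) \<or>
     (i = 1 \<and> j = n - 1) \<or> (j = 1 \<and> i = n - 1)"

end

theory Submission
  imports Defs "Jordan_Normal_Form.Spectral_Radius" "HOL-Analysis.Convex"
begin

text \<open>The ABC matrix is nonnegative and symmetric, so its spectral radius is its largest
  eigenvalue, and a positive eigenvector identifies it (Collatz--Wielandt). This gives
  \<open>\<rho>(S\<^sub>n) = \<surd>(n - 2)\<close> and \<open>\<rho>(S\<^sub>n\<^sub>-\<^sub>3\<^sub>,\<^sub>1) = \<surd>t\<close>, where \<open>t\<close> is the largest root of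
  \<open>t\<^sup>2 - (1 + A) t + A / 2\<close> with \<open>A = (n - 3)\<^sup>2 / (n - 2)\<close>, and \<open>t < n - 2\<close>.

  A tree with a vertex of degree \<open>n - 1\<close> or \<open>n - 2\<close> is \<open>S\<^sub>n\<close> or \<open>S\<^sub>n\<^sub>-\<^sub>3\<^sub>,\<^sub>1\<close>, so in every
  other tree all degrees are at most \<open>n - 3\<close> (hence \<open>n \<ge> 5\<close>). For \<open>n \<ge> 6\<close>, Cauchy--Schwarz
  applied to each row of the eigenvalue equation gives
  \<open>\<rho>\<^sup>2 \<le> max\<^sub>i \<Sum>\<^sub>j\<^sub>~\<^sub>i w\<^sub>i\<^sub>j\<^sup>2 d\<^sub>j = max\<^sub>i (d\<^sub>i (d\<^sub>i - 2) + \<Sum>\<^sub>j\<^sub>~\<^sub>i d\<^sub>j) / d\<^sub>i\<close>, and in a tree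
  \<open>\<Sum>\<^sub>j\<^sub>~\<^sub>i d\<^sub>j \<le> n - 1\<close>, which bounds \<open>\<rho>\<^sup>2\<close> by \<open>n - 4 + 2 / (n - 3) < t\<close>. For \<open>n = 5\<close> the
  tree is a path, whose ABC row sums are at most \<open>\<surd>2 = \<surd>t\<close> and smaller at a leaf;
  irreducibility makes the bound strict.\<close>

definition neighbours :: "nat \<Rightarrow> (nat \<Rightarrow> nat \<Rightarrow> bool) \<Rightarrow> nat \<Rightarrow> nat set" where
  "neighbours n E i = {j. j < n \<and> E i j}"

lemma deg_eq_card_neighbours: "deg n E i = card (neighbours n E i)"
  unfolding deg_def neighbours_def ..

lemma finite_neighbours [simp]: "finite (neighbours n E i)"
  unfolding neighbours_def by simp

lemma deg_pos_neighbour: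
  assumes "symp E" "i < n" "j \<in> neighbours n E i"
  shows "deg n E j > 0"
proof -
  have "i \<in> neighbours n E j" using assms unfolding neighbours_def by (auto dest: sympD)
  then show ?thesis unfolding deg_eq_card_neighbours by (auto simp: card_gt_0_iff)
qed

lemma sum_neighbours_swap:
  fixes g :: "nat \<Rightarrow> real"
  assumes "symp E"
  shows "(\<Sum>i<n. \<Sum>j\<in>neighbours n E i. g j) = (\<Sum>j<n. deg n E j * g j)"
proof -
  have "(\<Sum>i<n. \<Sum>j\<in>neighbours n E i. g j) = (\<Sum>i<n. \<Sum>j<n. if E i j then g j else 0)"
    by (simp add: neighbours_def sum.inter_filter[symmetric] lessThan_def)
  also have "\<dots> = (\<Sum>j<n. \<Sum>i<n. if E j i then g j else 0)"
    using assms by (subst sum.swap) (auto intro!: sum.cong dest: sympD)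
  also have "\<dots> = (\<Sum>j<n. deg n E j * g j)"
    by (simp add: sum.inter_filter[symmetric] lessThan_def deg_def)
  finally show ?thesis .
qed

lemma simple_graphD:
  assumes "simple_graph n E" "E i j"
  shows "i < n" "j < n" "E j i" "i \<noteq> j"
  using assms unfolding simple_graph_def by metis+

lemma simple_graph_symp: "simple_graph n E \<Longrightarrow> symp E"
  unfolding simple_graph_def symp_def by blast

lemma simple_graph_deg_le:
  assumes "simple_graph n E" "i < n"
  shows "deg n E i \<le> n - 1"
proof -
  have "neighbours n E i \<subseteq> {..<n} - {i}"
    using simple_graphD[OF assms(1)] unfolding neighbours_def by blast
  then have "deg n E i \<le> card ({..<n} - {i})"
    unfolding deg_eq_card_neighbours by (intro card_mono) auto
  then show ?thesis using assms(2) by simp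
qed

lemma finite_graph_edges: "finite (graph_edges n E)"
  by (rule finite_subset[of _ "{..<n} \<times> {..<n}"]) (auto simp: graph_edges_def)

lemma edge_in_graph_edges:
  assumes "simple_graph n E" "E a b"
  shows "(min a b, max a b) \<in> graph_edges n E"
  using simple_graphD[OF assms] assms(2) unfolding graph_edges_def
  by (cases "a < b") (auto simp: min_def max_def)

lemma handshake:
  assumes "simple_graph n E"
  shows "(\<Sum>i<n. deg n E i) = 2 * card (graph_edges n E)"
proof -
  let ?G = "graph_edges n E"
  have "(\<Sum>i<n. deg n E i) = card (SIGMA i:{..<n}. neighbours n E i)"
    by (simp add: card_SigmaI deg_eq_card_neighbours)
  also have "(SIGMA i:{..<n}. neighbours n E i) = ?G \<union> prod.swap ` ?G"
  proof (intro equalityI subsetI)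
    fix x assume "x \<in> (SIGMA i:{..<n}. neighbours n E i)"
    then obtain i j where x: "x = (i, j)" "E i j" unfolding neighbours_def by blast
    then have "i < j \<and> (i, j) \<in> ?G \<or> j < i \<and> (j, i) \<in> ?G"
      using simple_graphD[OF assms x(2)] unfolding graph_edges_def by auto
    then show "x \<in> ?G \<union> prod.swap ` ?G" using x(1) by force
  next
    fix x assume "x \<in> ?G \<union> prod.swap ` ?G"
    then show "x \<in> (SIGMA i:{..<n}. neighbours n E i)"
      using simple_graphD[OF assms] unfolding graph_edges_def neighbours_def by auto
  qed
  also have "card (?G \<union> prod.swap ` ?G) = card ?G + card (prod.swap ` ?G)"
    using finite_graph_edges by (intro card_Un_disjoint) (auto simp: graph_edges_def)
  also have "card (prod.swap ` ?G) = card ?G" by (simp add: card_image)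
  finally show ?thesis by simp
qed

section \<open>Eigenvalues of nonnegative matrices\<close>

lemma eigenvalue_mat_iff:
  fixes f :: "nat \<times> nat \<Rightarrow> 'a::field"
  shows "eigenvalue (mat n n f) k \<longleftrightarrow>
    (\<exists>x. (\<exists>i<n. x i \<noteq> 0) \<and> (\<forall>i<n. (\<Sum>j<n. f (i, j) * x j) = k * x i))"
proof
  assume "eigenvalue (mat n n f) k"
  then obtain v where v: "v \<in> carrier_vec n" "v \<noteq> 0\<^sub>v n" "mat n n f *\<^sub>v v = k \<cdot>\<^sub>v v"
    unfolding eigenvalue_def eigenvector_def by auto
  have "\<exists>i<n. v $ i \<noteq> 0"
    using v(1,2) by (metis eq_vecI index_zero_vec(1,2) carrier_vecD)
  moreover have "(\<Sum>j<n. f (i, j) * v $ j) = k * v $ i" if "i < n" for i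
  proof -
    have "(mat n n f *\<^sub>v v) $ i = (k \<cdot>\<^sub>v v) $ i" using v(3) by simp
    then show ?thesis using that v(1) by (auto simp: scalar_prod_def lessThan_atLeast0)
  qed
  ultimately show "\<exists>x. (\<exists>i<n. x i \<noteq> 0) \<and> (\<forall>i<n. (\<Sum>j<n. f (i, j) * x j) = k * x i)"
    by blast
next
  assume "\<exists>x. (\<exists>i<n. x i \<noteq> 0) \<and> (\<forall>i<n. (\<Sum>j<n. f (i, j) * x j) = k * x i)"
  then obtain x where x: "\<exists>i<n. x i \<noteq> 0" "\<forall>i<n. (\<Sum>j<n. f (i, j) * x j) = k * x i"
    by blast
  have "vec n x \<noteq> 0\<^sub>v n" using x(1) by (auto simp: vec_eq_iff)
  moreover have "mat n n f *\<^sub>v vec n x = k \<cdot>\<^sub>v vec n x"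
    using x(2) by (intro eq_vecI) (auto simp: scalar_prod_def lessThan_atLeast0)
  ultimately show "eigenvalue (mat n n f) k"
    unfolding eigenvalue_def eigenvector_def by (intro exI[of _ "vec n x"]) auto
qed

lemma finite_eigenvalues_mat:
  fixes f :: "nat \<times> nat \<Rightarrow> 'a::field"
  shows "finite {k. eigenvalue (mat n n f) k}"
  using card_finite_spectrum(1)[of "mat n n f" n] unfolding spectrum_def by simp

text \<open>\<open>k \<cdot> x\<^sup>* x = x\<^sup>* A x\<close> is real.\<close>
lemma eigenvalue_real_if_symmetric:
  fixes f :: "nat \<times> nat \<Rightarrow> real" and x :: "nat \<Rightarrow> complex"
  assumes sym: "\<forall>i<n. \<forall>j<n. f (i, j) = f (j, i)" and x: "\<exists>i<n. x i \<noteq> 0"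
    and eigen: "\<forall>i<n. (\<Sum>j<n. of_real (f (i, j)) * x j) = k * x i"
  shows "Im k = 0"
proof -
  let ?g = "\<lambda>ij. complex_of_real (f ij)"
  define s where "s = (\<Sum>i<n. cnj (x i) * (\<Sum>j<n. ?g (i, j) * x j))"
  define N where "N = (\<Sum>i<n. cnj (x i) * x i)"
  have s_eq: "s = k * N"
    unfolding s_def N_def using eigen by (simp add: sum_distrib_left algebra_simps)
  have s_sum: "s = (\<Sum>i<n. \<Sum>j<n. ?g (i, j) * (cnj (x i) * x j))"
    unfolding s_def by (simp add: sum_distrib_left algebra_simps)
  have "cnj s = (\<Sum>j<n. \<Sum>i<n. ?g (i, j) * (x i * cnj (x j)))"
    unfolding s_sum by (subst sum.swap) (simp add: algebra_simps)
  also have "\<dots> = s"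
    unfolding s_sum using sym by (intro sum.cong refl) (auto simp: algebra_simps)
  finally have "Im s = 0" by (metis Reals_cnj_iff complex_is_Real_iff)
  obtain i0 where i0: "i0 < n" "x i0 \<noteq> 0" using x by blast
  have "N = of_real (\<Sum>i<n. (norm (x i))\<^sup>2)"
    unfolding N_def by (simp add: complex_norm_square mult.commute del: of_real_power)
  moreover have "(\<Sum>i<n. (norm (x i))\<^sup>2) > 0" by (rule sum_pos2[of _ i0]) (use i0 in auto)
  ultimately show "Im k = 0" using \<open>Im s = 0\<close> s_eq by simp
qed

lemma symmetric_mat_has_eigenvalue:
  fixes f :: "nat \<times> nat \<Rightarrow> real"
  assumes n: "n > 0" and sym: "\<forall>i<n. \<forall>j<n. f (i, j) = f (j, i)"
  shows "\<exists>k. eigenvalue (mat n n f) k"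
proof -
  let ?g = "\<lambda>ij. complex_of_real (f ij)"
  obtain k where "eigenvalue (mat n n ?g) k"
    using spectrum_non_empty[of "mat n n ?g" n] n unfolding spectrum_def by auto
  then obtain x where x: "\<exists>i<n. x i \<noteq> 0" "\<forall>i<n. (\<Sum>j<n. ?g (i, j) * x j) = k * x i"
    unfolding eigenvalue_mat_iff by blast
  have "Im k = 0" using eigenvalue_real_if_symmetric[OF sym x] .
  then have re: "(\<Sum>j<n. f (i, j) * Re (x j)) = Re k * Re (x i)"
    and im: "(\<Sum>j<n. f (i, j) * Im (x j)) = Re k * Im (x i)" if "i < n" for i
    using arg_cong[OF x(2)[rule_format, OF that], of Re] arg_cong[OF x(2)[rule_format, OF that], of Im]
    by (simp_all add: Re_sum Im_sum)
  obtain i0 where i0: "i0 < n" "x i0 \<noteq> 0" using x(1) by blast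
  then have "Re (x i0) \<noteq> 0 \<or> Im (x i0) \<noteq> 0" using complex.expand by auto
  then have "eigenvalue (mat n n f) (Re k)"
  proof
    assume "Re (x i0) \<noteq> 0"
    then show ?thesis
      unfolding eigenvalue_mat_iff using re i0(1) by (intro exI[of _ "\<lambda>j. Re (x j)"]) auto
  next
    assume "Im (x i0) \<noteq> 0"
    then show ?thesis
      unfolding eigenvalue_mat_iff using im i0(1) by (intro exI[of _ "\<lambda>j. Im (x j)"]) auto
  qed
  then show ?thesis by blast
qed

lemma obtain_max_ratio:
  fixes v x :: "nat \<Rightarrow> real"
  assumes pos: "\<forall>i<n. x i > 0" and v: "\<exists>i<n. v i \<noteq> 0"
  obtains m i where "m > 0" "i < n" "\<bar>v i\<bar> = m * x i" "\<forall>j<n. \<bar>v j\<bar> \<le> m * x j"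
proof -
  define r where "r j = \<bar>v j\<bar> / x j" for j
  obtain i0 where i0: "i0 < n" "v i0 \<noteq> 0" using v by blast
  have "Max (r ` {..<n}) \<in> r ` {..<n}" using i0 by (intro Max_in) auto
  then obtain i where i: "i < n" "r i = Max (r ` {..<n})" by auto
  have le: "r j \<le> r i" if "j < n" for j using i that by auto
  have "r i0 > 0" using i0 pos unfolding r_def by auto
  then have "r i > 0" using le[OF i0(1)] by linarith
  moreover have "\<bar>v i\<bar> = r i * x i" using pos i(1) unfolding r_def by auto
  moreover have "\<bar>v j\<bar> \<le> r i * x j" if "j < n" for j
    using le[OF that] pos that unfolding r_def by (auto simp: divide_le_eq)
  ultimately show ?thesis using that i by blast
qed

lemma eigenvalue_abs_le_subinvariant:
  fixes f :: "nat \<times> nat \<Rightarrow> real"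
  assumes nonneg: "\<forall>i<n. \<forall>j<n. f (i, j) \<ge> 0" and pos: "\<forall>i<n. x i > 0"
    and sub: "\<forall>i<n. (\<Sum>j<n. f (i, j) * x j) \<le> c * x i"
    and "eigenvalue (mat n n f) k"
  shows "\<bar>k\<bar> \<le> c"
proof -
  obtain v where v: "\<exists>i<n. v i \<noteq> 0" "\<forall>i<n. (\<Sum>j<n. f (i, j) * v j) = k * v i"
    using assms(4) unfolding eigenvalue_mat_iff by blast
  obtain m i where m: "m > 0" "i < n" "\<bar>v i\<bar> = m * x i" "\<forall>j<n. \<bar>v j\<bar> \<le> m * x j"
    using obtain_max_ratio[OF pos v(1)] .
  have "\<bar>k\<bar> * \<bar>v i\<bar> = \<bar>\<Sum>j<n. f (i, j) * v j\<bar>" using v(2) m(2) by (simp add: abs_mult)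
  also have "\<dots> \<le> (\<Sum>j<n. f (i, j) * (m * x j))"
    using nonneg m(2,4)
    by (intro order_trans[OF sum_abs] sum_mono) (auto simp: abs_mult intro: mult_left_mono)
  also have "\<dots> = m * (\<Sum>j<n. f (i, j) * x j)" by (simp add: sum_distrib_left algebra_simps)
  also have "\<dots> \<le> c * \<bar>v i\<bar>" using sub m by simp
  finally show ?thesis using m pos by (simp add: mult_le_cancel_right)
qed

text \<open>The equality case of the Collatz--Wielandt bound.\<close>
lemma max_ratio_row_tight:
  fixes f :: "nat \<times> nat \<Rightarrow> real"
  assumes nonneg: "\<forall>i<n. \<forall>j<n. f (i, j) \<ge> 0"
    and sub: "\<forall>i<n. (\<Sum>j<n. f (i, j) * x j) \<le> c * x i"
    and v: "\<forall>i<n. (\<Sum>j<n. f (i, j) * v j) = k * v i" and kc: "\<bar>k\<bar> = c"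
    and m: "m > 0" "\<forall>j<n. \<bar>v j\<bar> \<le> m * x j" and i: "i < n" "\<bar>v i\<bar> = m * x i"
  shows "(\<Sum>j<n. f (i, j) * x j) = c * x i"
    and "\<And>j. j < n \<Longrightarrow> f (i, j) > 0 \<Longrightarrow> \<bar>v j\<bar> = m * x j"
proof -
  have "m * (c * x i) = \<bar>\<Sum>j<n. f (i, j) * v j\<bar>" using v i kc by (simp add: abs_mult)
  also have "\<dots> \<le> (\<Sum>j<n. f (i, j) * \<bar>v j\<bar>)"
    using nonneg i(1) by (intro order_trans[OF sum_abs]) (simp add: abs_mult)
  finally have lower: "m * (c * x i) \<le> (\<Sum>j<n. f (i, j) * \<bar>v j\<bar>)" .
  have dominated: "f (i, j) * \<bar>v j\<bar> \<le> f (i, j) * (m * x j)" if "j < n" for j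
    using nonneg i(1) m(2) that by (intro mult_left_mono) auto
  have rescale: "(\<Sum>j<n. f (i, j) * (m * x j)) = m * (\<Sum>j<n. f (i, j) * x j)"
    by (simp add: sum_distrib_left algebra_simps)
  have upper: "(\<Sum>j<n. f (i, j) * (m * x j)) \<le> m * (c * x i)"
    unfolding rescale using sub i(1) m(1) by (intro mult_left_mono) auto
  have "(\<Sum>j<n. f (i, j) * \<bar>v j\<bar>) \<le> (\<Sum>j<n. f (i, j) * (m * x j))"
    using dominated by (intro sum_mono) auto
  then have "m * (c * x i) \<le> m * (\<Sum>j<n. f (i, j) * x j)"
    using lower unfolding rescale by linarith
  then have "c * x i \<le> (\<Sum>j<n. f (i, j) * x j)" using m(1) by (rule mult_left_le_imp_le)
  then show "(\<Sum>j<n. f (i, j) * x j) = c * x i" using sub i(1) by force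
  show "\<bar>v j\<bar> = m * x j" if j: "j < n" "f (i, j) > 0" for j
  proof (rule ccontr)
    assume "\<bar>v j\<bar> \<noteq> m * x j"
    then have "\<bar>v j\<bar> < m * x j" using m(2) j(1) by force
    then have "(\<Sum>j<n. f (i, j) * \<bar>v j\<bar>) < (\<Sum>j<n. f (i, j) * (m * x j))"
      using j dominated by (intro sum_strict_mono_ex1) (auto intro!: bexI[of _ j])
    then show False using lower upper by linarith
  qed
qed

lemma eigenvalue_abs_less_subinvariant:
  fixes f :: "nat \<times> nat \<Rightarrow> real"
  assumes nonneg: "\<forall>i<n. \<forall>j<n. f (i, j) \<ge> 0" and pos: "\<forall>i<n. x i > 0"
    and sub: "\<forall>i<n. (\<Sum>j<n. f (i, j) * x j) \<le> c * x i"
    and strict: "i0 < n" "(\<Sum>j<n. f (i0, j) * x j) < c * x i0"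
    and irreducible: "graph_connected n (\<lambda>i j. i < n \<and> j < n \<and> f (i, j) > 0)"
    and eig: "eigenvalue (mat n n f) k"
  shows "\<bar>k\<bar> < c"
proof (rule ccontr)
  assume "\<not> \<bar>k\<bar> < c"
  then have kc: "\<bar>k\<bar> = c" using eigenvalue_abs_le_subinvariant[OF nonneg pos sub eig] by simp
  obtain v where v: "\<exists>i<n. v i \<noteq> 0" "\<forall>i<n. (\<Sum>j<n. f (i, j) * v j) = k * v i"
    using eig unfolding eigenvalue_mat_iff by blast
  obtain m i1 where m: "m > 0" "i1 < n" "\<bar>v i1\<bar> = m * x i1" "\<forall>j<n. \<bar>v j\<bar> \<le> m * x j"
    using obtain_max_ratio[OF pos v(1)] .
  note tight = max_ratio_row_tight[OF nonneg sub v(2) kc m(1,4)]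
  have "(\<lambda>i j. i < n \<and> j < n \<and> f (i, j) > 0)\<^sup>*\<^sup>* i1 i0"
    using irreducible m(2) strict(1) unfolding graph_connected_def by blast
  then have "i0 < n \<and> \<bar>v i0\<bar> = m * x i0"
    by (induction rule: rtranclp_induct) (use m(2,3) tight(2) in auto)
  then show False using tight(1) strict(2) by force
qed

lemma Max_eigenvalue_eq_positive_eigenvector:
  fixes f :: "nat \<times> nat \<Rightarrow> real"
  assumes "n > 0" and nonneg: "\<forall>i<n. \<forall>j<n. f (i, j) \<ge> 0" and pos: "\<forall>i<n. x i > 0"
    and eigen: "\<forall>i<n. (\<Sum>j<n. f (i, j) * x j) = \<mu> * x i"
  shows "Max {k. eigenvalue (mat n n f) k} = \<mu>"
proof (rule Max_eqI[OF finite_eigenvalues_mat])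
  show "k \<le> \<mu>" if "k \<in> {k. eigenvalue (mat n n f) k}" for k
    using eigenvalue_abs_le_subinvariant[OF nonneg pos _ that[simplified]] eigen by force
  show "\<mu> \<in> {k. eigenvalue (mat n n f) k}"
    unfolding mem_Collect_eq eigenvalue_mat_iff using assms(1) pos eigen
    by (intro exI[of _ x]) force
qed

text \<open>Cauchy--Schwarz on each row, splitting \<open>w\<^sub>i\<^sub>j v\<^sub>j = (w\<^sub>i\<^sub>j \<surd>d\<^sub>j) (v\<^sub>j / \<surd>d\<^sub>j)\<close>, gives
  \<open>(k v\<^sub>i)\<^sup>2 \<le> C \<Sum>\<^sub>j\<^sub>~\<^sub>i v\<^sub>j\<^sup>2 / d\<^sub>j\<close>; summed over \<open>i\<close>, each \<open>v\<^sub>j\<^sup>2 / d\<^sub>j\<close> occurs \<open>d\<^sub>j\<close> times.\<close>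
lemma eigenvalue_sq_le_neighbour_bound:
  fixes w :: "nat \<times> nat \<Rightarrow> real"
  assumes sym: "symp E" and support: "\<forall>i<n. \<forall>j<n. \<not> E i j \<longrightarrow> w (i, j) = 0"
    and bound: "\<forall>i<n. (\<Sum>j\<in>neighbours n E i. (w (i, j))\<^sup>2 * deg n E j) \<le> C"
    and eig: "eigenvalue (mat n n w) k"
  shows "k\<^sup>2 \<le> C"
proof -
  let ?N = "neighbours n E"
  obtain v where v: "\<exists>i<n. v i \<noteq> 0" "\<forall>i<n. (\<Sum>j<n. w (i, j) * v j) = k * v i"
    using eig unfolding eigenvalue_mat_iff by blast
  obtain i0 where i0: "i0 < n" "v i0 \<noteq> 0" using v(1) by blast
  have "0 \<le> (\<Sum>j\<in>?N i0. (w (i0, j))\<^sup>2 * deg n E j)" by (intro sum_nonneg) auto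
  then have C_nonneg: "C \<ge> 0" using bound i0(1) by force
  have row: "(k * v i)\<^sup>2 \<le> C * (\<Sum>j\<in>?N i. (v j)\<^sup>2 / deg n E j)" if i: "i < n" for i
  proof -
    have "k * v i = (\<Sum>j<n. w (i, j) * v j)" using v(2) i by simp
    also have "\<dots> = (\<Sum>j\<in>?N i. w (i, j) * v j)"
      using support i unfolding neighbours_def by (intro sum.mono_neutral_right) auto
    also have "\<dots> = (\<Sum>j\<in>?N i. (w (i, j) * sqrt (deg n E j)) * (v j / sqrt (deg n E j)))"
    proof (intro sum.cong refl)
      fix j assume "j \<in> ?N i"
      then have "deg n E j > 0" by (rule deg_pos_neighbour[OF sym i])
      then show "w (i, j) * v j = (w (i, j) * sqrt (deg n E j)) * (v j / sqrt (deg n E j))" by simp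
    qed
    finally have "(k * v i)\<^sup>2 \<le> (\<Sum>j\<in>?N i. (w (i, j) * sqrt (deg n E j))\<^sup>2)
        * (\<Sum>j\<in>?N i. (v j / sqrt (deg n E j))\<^sup>2)"
      by (simp only: Cauchy_Schwarz_ineq_sum)
    also have "\<dots> = (\<Sum>j\<in>?N i. (w (i, j))\<^sup>2 * deg n E j) * (\<Sum>j\<in>?N i. (v j)\<^sup>2 / deg n E j)"
      by (simp add: power_mult_distrib power_divide)
    also have "\<dots> \<le> C * (\<Sum>j\<in>?N i. (v j)\<^sup>2 / deg n E j)"
      using bound i by (intro mult_right_mono sum_nonneg) auto
    finally show ?thesis .
  qed
  have "k\<^sup>2 * (\<Sum>i<n. (v i)\<^sup>2) = (\<Sum>i<n. (k * v i)\<^sup>2)"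
    by (simp add: sum_distrib_left power_mult_distrib)
  also have "\<dots> \<le> (\<Sum>i<n. C * (\<Sum>j\<in>?N i. (v j)\<^sup>2 / deg n E j))"
    using row by (intro sum_mono) auto
  also have "\<dots> = C * (\<Sum>j<n. deg n E j * ((v j)\<^sup>2 / deg n E j))"
    by (simp add: sum_distrib_left[symmetric] sum_neighbours_swap[OF sym])
  also have "\<dots> \<le> C * (\<Sum>j<n. (v j)\<^sup>2)"
    using C_nonneg by (intro mult_left_mono sum_mono) simp_all
  finally have "k\<^sup>2 * (\<Sum>i<n. (v i)\<^sup>2) \<le> C * (\<Sum>i<n. (v i)\<^sup>2)" .
  moreover have "(\<Sum>i<n. (v i)\<^sup>2) > 0" using i0 by (intro sum_pos2[of _ i0]) auto
  ultimately show ?thesis by simp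
qed

section \<open>Trees\<close>

text \<open>Breadth-first search from vertex \<open>0\<close>: \<open>h\<close> is the distance to \<open>0\<close> and \<open>p\<close> a parent.\<close>
lemma connected_obtain_parent:
  assumes "graph_connected n E" "0 < n"
  obtains p h :: "nat \<Rightarrow> nat" where "\<And>j. 0 < j \<Longrightarrow> j < n \<Longrightarrow> E (p j) j \<and> h (p j) < h j"
proof -
  define h where "h j = (LEAST k. (E ^^ k) 0 j)" for j
  have walk: "(E ^^ h j) 0 j" if "j < n" for j
  proof -
    have "E\<^sup>*\<^sup>* 0 j" using assms that unfolding graph_connected_def by blast
    then show ?thesis unfolding h_def rtranclp_power by (metis LeastI)
  qed
  have "\<exists>q. E q j \<and> h q < h j" if j: "0 < j" "j < n" for j
  proof -
    obtain m where m: "h j = Suc m" using walk[OF j(2)] j(1) by (cases "h j") auto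
    then obtain q where "(E ^^ m) 0 q" "E q j" using walk[OF j(2)] by (metis relpowp_Suc_E)
    moreover have "h q \<le> m" using \<open>(E ^^ m) 0 q\<close> unfolding h_def by (rule Least_le)
    ultimately show ?thesis using m by auto
  qed
  then have "\<forall>j. \<exists>q. 0 < j \<longrightarrow> j < n \<longrightarrow> E q j \<and> h q < h j" by blast
  then obtain p where "\<forall>j. 0 < j \<longrightarrow> j < n \<longrightarrow> E (p j) j \<and> h (p j) < h j" by metis
  then show ?thesis using that by blast
qed

lemma card_graph_edges_connected:
  assumes sg: "simple_graph n E" and cn: "graph_connected n E"
  shows "n - 1 \<le> card (graph_edges n E)"
proof (cases "n = 0")
  case False
  then obtain p h :: "nat \<Rightarrow> nat" where p: "\<And>j. 0 < j \<Longrightarrow> j < n \<Longrightarrow> E (p j) j \<and> h (p j) < h j"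
    using connected_obtain_parent[OF cn] by blast
  define g where "g j = (min j (p j), max j (p j))" for j
  have "inj_on g {1..<n}"
  proof (rule inj_onI)
    fix a b assume a: "a \<in> {1..<n}" and b: "b \<in> {1..<n}" and "g a = g b"
    then have "a = b \<or> (a = p b \<and> b = p a)"
      unfolding g_def by (auto simp: min_def max_def split: if_splits)
    then show "a = b" using p[of a] p[of b] a b by force
  qed
  moreover have "g ` {1..<n} \<subseteq> graph_edges n E"
    unfolding g_def using p edge_in_graph_edges[OF sg] simple_graphD(3)[OF sg] by force
  ultimately have "card {1..<n} \<le> card (graph_edges n E)"
    using card_inj_on_le finite_graph_edges by blast
  then show ?thesis by simp
qed simp

definition delete_edge :: "(nat \<Rightarrow> nat \<Rightarrow> bool) \<Rightarrow> nat \<Rightarrow> nat \<Rightarrow> nat \<Rightarrow> nat \<Rightarrow> bool" where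
  "delete_edge E a b x y \<longleftrightarrow> E x y \<and> {x, y} \<noteq> {a, b}"

lemma connected_delete_edge:
  assumes sym: "symp E" and cn: "graph_connected n E" and path: "(delete_edge E a b)\<^sup>*\<^sup>* a b"
  shows "graph_connected n (delete_edge E a b)"
proof -
  have "symp (delete_edge E a b)"
    using sym unfolding delete_edge_def symp_def by (auto simp: insert_commute)
  then have "(delete_edge E a b)\<^sup>*\<^sup>* b a" using path by (metis sympD symp_rtranclp)
  then have "E \<le> (delete_edge E a b)\<^sup>*\<^sup>*"
    using path unfolding delete_edge_def by (auto simp: doubleton_eq_iff)
  then have "E\<^sup>*\<^sup>* \<le> (delete_edge E a b)\<^sup>*\<^sup>*" by (metis rtranclp_mono rtranclp_idemp)
  then show ?thesis using cn unfolding graph_connected_def by blast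
qed

text \<open>Deleting an edge of a tree leaves \<open>n - 2\<close> edges, too few for a connected graph.\<close>
lemma tree_no_cycle:
  assumes tr: "is_tree n E" and ab: "E a b"
  shows "\<not> (delete_edge E a b)\<^sup>*\<^sup>* a b"
proof
  assume path: "(delete_edge E a b)\<^sup>*\<^sup>* a b"
  have sg: "simple_graph n E" and ce: "card (graph_edges n E) = n - 1"
    using tr unfolding is_tree_def by auto
  have sg': "simple_graph n (delete_edge E a b)"
    using sg unfolding simple_graph_def delete_edge_def by (auto simp: insert_commute)
  have "graph_connected n (delete_edge E a b)"
    using connected_delete_edge simple_graph_symp[OF sg] tr path unfolding is_tree_def by blast
  then have "n - 1 \<le> card (graph_edges n (delete_edge E a b))"
    by (rule card_graph_edges_connected[OF sg'])
  moreover have "graph_edges n (delete_edge E a b) = graph_edges n E - {(min a b, max a b)}"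
    using simple_graphD[OF sg ab] unfolding graph_edges_def delete_edge_def
    by (auto simp: doubleton_eq_iff min_def max_def)
  then have "card (graph_edges n (delete_edge E a b)) = n - 2"
    using ce edge_in_graph_edges[OF sg ab] finite_graph_edges by (simp add: card_Diff_singleton)
  ultimately show False using simple_graphD[OF sg ab] by simp
qed

lemma tree_no_triangle:
  assumes tr: "is_tree n E" and "E i a" "E i b"
  shows "\<not> E a b"
proof
  assume ab: "E a b"
  have sg: "simple_graph n E" using tr unfolding is_tree_def by simp
  have "a \<noteq> i" "b \<noteq> i" "a \<noteq> b" using assms ab simple_graphD(4)[OF sg] by metis+
  then have "(delete_edge E a b)\<^sup>*\<^sup>* a b"
    using assms simple_graphD(3)[OF sg]
    by (intro converse_rtranclp_into_rtranclp[of _ a i] r_into_rtranclp)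
      (auto simp: delete_edge_def doubleton_eq_iff)
  then show False using tree_no_cycle[OF tr ab] by blast
qed

lemma tree_deg_pos:
  assumes tr: "is_tree n E" and "2 \<le> n" "i < n"
  shows "deg n E i \<ge> 1"
proof -
  obtain j where j: "j < n" "j \<noteq> i"
    using assms(2,3) by (intro that[of "if i = 0 then 1 else 0"]) auto
  have "E\<^sup>*\<^sup>* i j" using tr assms(3) j(1) unfolding is_tree_def graph_connected_def by blast
  then obtain y where "E i y" using j(2) by (metis converse_rtranclpE)
  then have "y \<in> neighbours n E i"
    using tr unfolding is_tree_def neighbours_def simple_graph_def by blast
  then show ?thesis unfolding deg_eq_card_neighbours by (auto simp: Suc_le_eq card_gt_0_iff)
qed

lemma tree_sum_deg: "is_tree n E \<Longrightarrow> (\<Sum>i<n. deg n E i) = 2 * (n - 1)"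
  using handshake unfolding is_tree_def by simp

text \<open>The neighbourhoods of the neighbours of \<open>i\<close> are disjoint sets of edges, since a tree has
  no triangles.\<close>
lemma tree_sum_neighbour_deg:
  assumes tr: "is_tree n E"
  shows "(\<Sum>j\<in>neighbours n E i. deg n E j) \<le> n - 1"
proof -
  have sg: "simple_graph n E" using tr unfolding is_tree_def by simp
  let ?S = "SIGMA j:neighbours n E i. neighbours n E j"
  let ?h = "\<lambda>(j, k). (min j k, max j k)"
  have "inj_on ?h ?S"
  proof (rule inj_onI)
    fix x y assume "x \<in> ?S" "y \<in> ?S" "?h x = ?h y"
    moreover have "\<not> E j j'" if "E i j" "E i j'" for j j' by (rule tree_no_triangle[OF tr that])
    ultimately show "x = y"
      unfolding neighbours_def by (auto simp: min_def max_def split: if_splits)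
  qed
  moreover have "?h ` ?S \<subseteq> graph_edges n E"
    using edge_in_graph_edges[OF sg] unfolding neighbours_def by auto
  ultimately have "card ?S \<le> card (graph_edges n E)"
    using card_inj_on_le finite_graph_edges by blast
  then show ?thesis
    using tr unfolding is_tree_def by (simp add: card_SigmaI deg_eq_card_neighbours)
qed

lemma tree_ex_deg_ge_2:
  assumes "is_tree n E" "3 \<le> n"
  shows "\<exists>i<n. deg n E i \<ge> 2"
proof (rule ccontr)
  assume "\<not> ?thesis"
  then have "(\<Sum>i<n. deg n E i) \<le> (\<Sum>i<(n::nat). 1)" by (intro sum_mono) auto
  then show False using tree_sum_deg[OF assms(1)] assms(2) by simp
qed

lemma tree_ex_leaf:
  assumes tr: "is_tree n E" and "2 \<le> n"
  shows "\<exists>i<n. deg n E i = 1"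
proof (rule ccontr)
  assume "\<not> ?thesis"
  then have "deg n E i \<ge> 2" if "i < n" for i
    using tree_deg_pos[OF tr assms(2) that] that by force
  then have "(\<Sum>i<(n::nat). 2) \<le> (\<Sum>i<n. deg n E i)" by (intro sum_mono) auto
  then show False using tree_sum_deg[OF tr] assms(2) by simp
qed

text \<open>Two adjacent leaves would form a connected component of their own.\<close>
lemma tree_leaf_not_adjacent_leaf:
  assumes tr: "is_tree n E" and "3 \<le> n" and e: "E i j" and "deg n E i = 1"
  shows "deg n E j \<noteq> 1"
proof
  assume "deg n E j = 1"
  have sg: "simple_graph n E" using tr unfolding is_tree_def by simp
  have "j \<in> neighbours n E i" "i \<in> neighbours n E j"
    using simple_graphD[OF sg e] e unfolding neighbours_def by auto
  then have Ni: "neighbours n E i = {j}" and Nj: "neighbours n E j = {i}"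
    using \<open>deg n E i = 1\<close> \<open>deg n E j = 1\<close> unfolding deg_eq_card_neighbours
    by (metis card_1_singletonE singletonD)+
  obtain k where k: "k < n" "k \<notin> {i, j}"
  proof -
    have "\<exists>k<3. k \<noteq> i \<and> k \<noteq> j" by presburger
    then obtain k where "k < 3" "k \<noteq> i" "k \<noteq> j" by blast
    then show ?thesis using that[of k] assms(2) by simp
  qed
  have "E\<^sup>*\<^sup>* i k"
    using tr simple_graphD(1)[OF sg e] k(1) unfolding is_tree_def graph_connected_def by blast
  then have "k \<in> {i, j}"
  proof (induction rule: rtranclp_induct)
    case (step a b)
    then have "b \<in> neighbours n E a"
      using simple_graphD(2)[OF sg step(2)] unfolding neighbours_def by simp
    then show ?case using step Ni Nj by auto
  qed simp
  then show False using k(2) by simp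
qed

section \<open>Trees with a vertex of degree \<open>n - 1\<close> or \<open>n - 2\<close>\<close>

lemma bij_betw_extend:
  assumes g: "bij_betw g A' B'" and "A' \<subseteq> A" "B' \<subseteq> B" "finite A" "finite B"
    and "card A = card B"
  obtains f where "bij_betw f A B" "\<And>x. x \<in> A' \<Longrightarrow> f x = g x"
proof -
  have "card (A - A') = card (B - B')"
    using assms bij_betw_same_card[OF g] by (simp add: card_Diff_subset finite_subset)
  then obtain h where h: "bij_betw h (A - A') (B - B')"
    using finite_same_card_bij[of "A - A'" "B - B'"] assms(4,5) by blast
  define f where "f x = (if x \<in> A' then g x else h x)" for x
  have "bij_betw f A' B'" using g by (rule bij_betw_cong[THEN iffD1, rotated]) (simp add: f_def)
  moreover have "bij_betw f (A - A') (B - B')"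
    using h by (rule bij_betw_cong[THEN iffD1, rotated]) (simp add: f_def)
  ultimately have "bij_betw f (A' \<union> (A - A')) (B' \<union> (B - B'))" by (rule bij_betw_combine) blast
  then have "bij_betw f A B" using assms(2,3) by (simp add: Un_absorb1)
  then show ?thesis using that by (simp add: f_def)
qed

lemma tree_iso_star:
  assumes tr: "is_tree n E" and c: "c < n" "deg n E c = n - 1"
  shows "graph_iso n E (star_graph n)"
proof -
  have sg: "simple_graph n E" using tr unfolding is_tree_def by simp
  have "neighbours n E c \<subseteq> {..<n} - {c}"
    using simple_graphD[OF sg] unfolding neighbours_def by blast
  then have "neighbours n E c = {..<n} - {c}"
    using c by (intro card_subset_eq) (auto simp: deg_eq_card_neighbours)
  then have Ec: "E c j" if "j < n" "j \<noteq> c" for j using that unfolding neighbours_def by blast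
  have shape: "E i j \<longleftrightarrow> i \<noteq> j \<and> (i = c \<or> j = c)" if ij: "i < n" "j < n" for i j
  proof
    assume e: "E i j"
    have "i = c \<or> j = c"
    proof (rule ccontr)
      assume "\<not> (i = c \<or> j = c)"
      then have "E c i" "E c j" using Ec ij by auto
      then show False using tree_no_triangle[OF tr] e by blast
    qed
    then show "i \<noteq> j \<and> (i = c \<or> j = c)" using simple_graphD(4)[OF sg e] by blast
  next
    assume "i \<noteq> j \<and> (i = c \<or> j = c)"
    then show "E i j" using Ec ij simple_graphD(3)[OF sg] by blast
  qed
  obtain f where f: "bij_betw f {0..<n} {0..<n}" "f c = 0"
    using bij_betw_extend[of "\<lambda>_. 0" "{c}" "{0}" "{0..<n}" "{0..<n}"] c(1) by auto
  have inj: "f i = f j \<longleftrightarrow> i = j" if "i < n" "j < n" for i j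
    using bij_betw_imp_inj_on[OF f(1)] that by (simp add: inj_on_eq_iff)
  have range: "f i < n" if "i < n" for i using bij_betwE[OF f(1)] that by simp
  have f0: "f i = 0 \<longleftrightarrow> i = c" if "i < n" for i using inj[OF that c(1)] f(2) by simp
  have "E i j \<longleftrightarrow> star_graph n (f i) (f j)" if ij: "i < n" "j < n" for i j
  proof -
    have "star_graph n (f i) (f j) \<longleftrightarrow> f i \<noteq> f j \<and> (f i = 0 \<or> f j = 0)"
      using range[OF ij(1)] range[OF ij(2)] unfolding star_graph_def by simp
    then show ?thesis unfolding shape[OF ij] inj[OF ij] f0[OF ij(1)] f0[OF ij(2)] by blast
  qed
  then show ?thesis using f(1) unfolding graph_iso_def by blast
qed

text \<open>A vertex \<open>c\<close> of degree \<open>n - 2\<close> misses exactly one vertex \<open>z\<close>; \<open>z\<close> hangs off some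
  neighbour \<open>w\<close> of \<open>c\<close>, and any further edge at \<open>z\<close> would close a cycle through \<open>c\<close>.\<close>
lemma tree_obtain_missed_vertex:
  assumes tr: "is_tree n E" and n: "4 \<le> n" and c: "c < n" "deg n E c = n - 2"
  obtains w z where "w < n" "z < n" "c \<noteq> w" "c \<noteq> z" "w \<noteq> z" "\<not> E c z" "E z w"
    "\<And>x. x < n \<Longrightarrow> x \<noteq> c \<Longrightarrow> x \<noteq> z \<Longrightarrow> E c x" "\<And>y. E z y \<Longrightarrow> y = w"
proof -
  have sg: "simple_graph n E" using tr unfolding is_tree_def by simp
  have sub: "neighbours n E c \<subseteq> {..<n} - {c}"
    using simple_graphD[OF sg] unfolding neighbours_def by blast
  have "card (({..<n} - {c}) - neighbours n E c) = 1"
    using sub c n by (subst card_Diff_subset) (auto simp: deg_eq_card_neighbours)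
  then obtain z where z: "({..<n} - {c}) - neighbours n E c = {z}" by (rule card_1_singletonE)
  then have zn: "z < n" "z \<noteq> c" "\<not> E c z" unfolding neighbours_def by auto
  have Ec: "E c x" if "x < n" "x \<noteq> c" "x \<noteq> z" for x
    using z that unfolding neighbours_def by blast
  have "neighbours n E z \<noteq> {}"
    using tree_deg_pos[OF tr _ zn(1)] n by (auto simp: deg_eq_card_neighbours)
  then obtain w where w: "E z w" "w < n" unfolding neighbours_def by blast
  have wc: "w \<noteq> c" "w \<noteq> z" using w zn simple_graphD[OF sg] by blast+
  have "y = w" if "E z y" for y
  proof (rule ccontr)
    assume "y \<noteq> w"
    have y: "y < n" "y \<noteq> z" "y \<noteq> c" using that zn(3) simple_graphD[OF sg that] by auto
    then have "(delete_edge E z y)\<^sup>*\<^sup>* z y"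
      using w wc zn(2) \<open>y \<noteq> w\<close> Ec[of w] Ec[OF y(1) y(3) y(2)] simple_graphD(3)[OF sg]
      by (intro converse_rtranclp_into_rtranclp[of _ z w] converse_rtranclp_into_rtranclp[of _ w c]
          r_into_rtranclp) (auto simp: delete_edge_def doubleton_eq_iff)
    then show False using tree_no_cycle[OF tr that] by blast
  qed
  then show ?thesis using that[of w z] w zn wc Ec by blast
qed

lemma tree_double_star_shape:
  assumes tr: "is_tree n E" and n: "4 \<le> n" and c: "c < n" "deg n E c = n - 2"
  obtains w z where "w < n" "z < n" "c \<noteq> w" "c \<noteq> z" "w \<noteq> z"
    "\<And>i j. i < n \<Longrightarrow> j < n \<Longrightarrow> E i j \<longleftrightarrow>
      (i = c \<and> j \<notin> {c, z}) \<or> (j = c \<and> i \<notin> {c, z}) \<or> (i = z \<and> j = w) \<or> (i = w \<and> j = z)"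
proof -
  have sg: "simple_graph n E" using tr unfolding is_tree_def by simp
  obtain w z where wz: "w < n" "z < n" "c \<noteq> w" "c \<noteq> z" "w \<noteq> z" "\<not> E c z" "E z w"
    and Ec: "\<And>x. x < n \<Longrightarrow> x \<noteq> c \<Longrightarrow> x \<noteq> z \<Longrightarrow> E c x" and zw_only: "\<And>y. E z y \<Longrightarrow> y = w"
    using tree_obtain_missed_vertex[OF assms] by blast
  have shape: "E i j \<longleftrightarrow>
      (i = c \<and> j \<notin> {c, z}) \<or> (j = c \<and> i \<notin> {c, z}) \<or> (i = z \<and> j = w) \<or> (i = w \<and> j = z)"
    if ij: "i < n" "j < n" for i j
  proof
    assume e: "E i j"
    have "i \<noteq> j" "E j i" using simple_graphD[OF sg e] by auto
    show "(i = c \<and> j \<notin> {c, z}) \<or> (j = c \<and> i \<notin> {c, z}) \<or> (i = z \<and> j = w) \<or> (i = w \<and> j = z)"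
    proof (cases "i = c \<or> j = c")
      case True
      then consider "i = c" | "j = c" by blast
      then show ?thesis
      proof cases
        case 1
        then have "j \<notin> {c, z}" using e wz(6) \<open>i \<noteq> j\<close> by auto
        then show ?thesis using 1 by blast
      next
        case 2
        then have "i \<notin> {c, z}" using \<open>E j i\<close> wz(6) \<open>i \<noteq> j\<close> by auto
        then show ?thesis using 2 by blast
      qed
    next
      case False
      have "i = z \<or> j = z"
      proof (rule ccontr)
        assume "\<not> (i = z \<or> j = z)"
        then have "E c i" "E c j" using Ec ij False by auto
        then show False using tree_no_triangle[OF tr] e by blast
      qed
      then show ?thesis using zw_only e \<open>E j i\<close> by auto
    qed
  next
    assume "(i = c \<and> j \<notin> {c, z}) \<or> (j = c \<and> i \<notin> {c, z}) \<or> (i = z \<and> j = w) \<or> (i = w \<and> j = z)"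
    then show "E i j" using Ec ij wz(7) simple_graphD(3)[OF sg] by auto
  qed
  show ?thesis by (rule that[of w z]) (use wz shape in auto)
qed

lemma double_star_graph_iff:
  assumes "4 \<le> n" "a < n" "b < n"
  shows "double_star_graph n a b \<longleftrightarrow> (a = 0 \<and> b \<notin> {0, n - 1}) \<or> (b = 0 \<and> a \<notin> {0, n - 1})
    \<or> (a = 1 \<and> b = n - 1) \<or> (a = n - 1 \<and> b = 1)"
  using assms unfolding double_star_graph_def by auto

lemma tree_iso_double_star:
  assumes tr: "is_tree n E" and n: "4 \<le> n" and c: "c < n" "deg n E c = n - 2"
  shows "graph_iso n E (double_star_graph n)"
proof -
  obtain w z where wz: "w < n" "z < n" "c \<noteq> w" "c \<noteq> z" "w \<noteq> z" and shape:
    "\<And>i j. i < n \<Longrightarrow> j < n \<Longrightarrow> E i j \<longleftrightarrow>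
      (i = c \<and> j \<notin> {c, z}) \<or> (j = c \<and> i \<notin> {c, z}) \<or> (i = z \<and> j = w) \<or> (i = w \<and> j = z)"
    using tree_double_star_shape[OF assms] by blast
  let ?g = "\<lambda>x. if x = c then 0 else if x = w then 1 else n - 1"
  have g: "bij_betw ?g {c, w, z} {0, 1, n - 1}"
    using wz n unfolding bij_betw_def inj_on_def by auto
  obtain f where f: "bij_betw f {0..<n} {0..<n}" "\<And>x. x \<in> {c, w, z} \<Longrightarrow> f x = ?g x"
    by (rule bij_betw_extend[OF g, of "{0..<n}" "{0..<n}"]) (use c(1) wz n in auto)
  have inj: "f i = f j \<longleftrightarrow> i = j" if "i < n" "j < n" for i j
    using bij_betw_imp_inj_on[OF f(1)] that by (simp add: inj_on_eq_iff)
  have range: "f i < n" if "i < n" for i using bij_betwE[OF f(1)] that by simp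
  have f_cwz: "f c = 0" "f w = 1" "f z = n - 1" using f(2) wz by auto
  have f_eq: "f i = 0 \<longleftrightarrow> i = c" "f i = 1 \<longleftrightarrow> i = w" "f i = n - 1 \<longleftrightarrow> i = z"
    if "i < n" for i
    using inj[OF that c(1)] inj[OF that wz(1)] inj[OF that wz(2)] unfolding f_cwz .
  have "E i j \<longleftrightarrow> double_star_graph n (f i) (f j)" if ij: "i < n" "j < n" for i j
    unfolding shape[OF ij] double_star_graph_iff[OF n range[OF ij(1)] range[OF ij(2)]]
    by (simp only: f_eq[OF ij(1)] f_eq[OF ij(2)] insert_iff empty_iff) blast
  then show ?thesis using f(1) unfolding graph_iso_def by blast
qed

definition abc_weight :: "nat \<Rightarrow> nat \<Rightarrow> real" where
  "abc_weight a b = sqrt ((real a + real b - 2) / (real a * real b))"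

definition abc_entry :: "nat \<Rightarrow> (nat \<Rightarrow> nat \<Rightarrow> bool) \<Rightarrow> nat \<times> nat \<Rightarrow> real" where
  "abc_entry n E = (\<lambda>(i, j). if E i j then abc_weight (deg n E i) (deg n E j) else 0)"

lemma abc_matrix_eq: "abc_matrix n E = mat n n (abc_entry n E)"
  unfolding abc_matrix_def abc_entry_def abc_weight_def ..

lemma abc_weight_commute: "abc_weight a b = abc_weight b a"
  unfolding abc_weight_def by (simp add: add.commute mult.commute)

lemma abc_weight_one: "abc_weight a 1 = sqrt ((real a - 1) / real a)"
  unfolding abc_weight_def by simp

lemma abc_weight_two: "b \<ge> 1 \<Longrightarrow> abc_weight 2 b = sqrt (1 / 2)"
  unfolding abc_weight_def by simp

lemma abc_weight_path:
  assumes "a \<in> {1, 2}" "b \<in> {1, 2}" "\<not> (a = 1 \<and> b = 1)"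
  shows "abc_weight a b = sqrt (1 / 2)"
proof (cases "a = 2")
  case True
  then show ?thesis using assms(2) abc_weight_two[of b] by auto
next
  case False
  then have "b = 2" "a \<ge> 1" using assms by auto
  then show ?thesis using abc_weight_two[of a] abc_weight_commute[of a b] by simp
qed

lemma abc_weight_sq_mult:
  assumes "a \<ge> 1" "b \<ge> 1"
  shows "(abc_weight a b)\<^sup>2 * b = (real a + real b - 2) / real a"
  using assms unfolding abc_weight_def by simp

text \<open>Also for degree \<open>0\<close>, where the division by zero yields \<open>0\<close>.\<close>
lemma abc_weight_nonneg: "abc_weight a b \<ge> 0"
  unfolding abc_weight_def by (cases "a = 0 \<or> b = 0") auto

lemma abc_entry_nonneg: "abc_entry n E (i, j) \<ge> 0"
  unfolding abc_entry_def by (simp add: abc_weight_nonneg)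

lemma abc_row_sum:
  "(\<Sum>j<n. abc_entry n E (i, j) * x j) =
    (\<Sum>j\<in>neighbours n E i. abc_weight (deg n E i) (deg n E j) * x j)"
proof -
  have "neighbours n E i = {j \<in> {..<n}. E i j}" unfolding neighbours_def by auto
  then have "(\<Sum>j\<in>neighbours n E i. abc_weight (deg n E i) (deg n E j) * x j) =
      (\<Sum>j<n. if E i j then abc_weight (deg n E i) (deg n E j) * x j else 0)"
    by (simp only: sum.inter_filter[OF finite_lessThan])
  also have "\<dots> = (\<Sum>j<n. abc_entry n E (i, j) * x j)"
    by (intro sum.cong) (auto simp: abc_entry_def)
  finally show ?thesis ..
qed

lemma rho_abc_eq_positive_eigenvector:
  assumes "n > 0" and pos: "\<forall>i<n. x i > 0"
    and eigen: "\<forall>i<n. (\<Sum>j\<in>neighbours n E i. abc_weight (deg n E i) (deg n E j) * x j) = \<mu> * x i"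
  shows "rho_abc n E = \<mu>"
  unfolding rho_abc_def abc_matrix_eq
  using assms(1) abc_entry_nonneg pos eigen
  by (intro Max_eigenvalue_eq_positive_eigenvector) (auto simp: abc_row_sum)

lemma rho_abc_less:
  assumes "n > 0" "symp E" and bound: "\<And>k. eigenvalue (abc_matrix n E) k \<Longrightarrow> k < r"
  shows "rho_abc n E < r"
proof -
  have "\<forall>i<n. \<forall>j<n. abc_entry n E (i, j) = abc_entry n E (j, i)"
    using assms(2) unfolding abc_entry_def by (auto simp: abc_weight_commute dest: sympD)
  then have "{k. eigenvalue (abc_matrix n E) k} \<noteq> {}"
    unfolding abc_matrix_eq using symmetric_mat_has_eigenvalue[OF assms(1)] by blast
  then have "rho_abc n E \<in> {k. eigenvalue (abc_matrix n E) k}"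
    unfolding rho_abc_def abc_matrix_eq using finite_eigenvalues_mat by (rule Max_in[rotated])
  then show ?thesis using bound by blast
qed

section \<open>The star and the double star\<close>

lemma star_neighbours:
  "neighbours n (star_graph n) 0 = {1..<n}"
  "1 \<le> j \<Longrightarrow> j < n \<Longrightarrow> neighbours n (star_graph n) j = {0}"
  unfolding neighbours_def star_graph_def by auto

lemma rho_abc_star:
  assumes n: "3 \<le> n"
  shows "rho_abc n (star_graph n) = sqrt (real n - 2)"
proof -
  define \<omega> where "\<omega> = sqrt ((real n - 2) / (real n - 1))"
  define x :: "nat \<Rightarrow> real" where "x j = (if j = 0 then sqrt (real n - 2) else \<omega>)" for j
  have deg0: "deg n (star_graph n) 0 = n - 1"
    by (simp add: deg_eq_card_neighbours star_neighbours)
  have deg: "deg n (star_graph n) j = 1" if "1 \<le> j" "j < n" for j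
    using star_neighbours(2)[OF that] by (simp add: deg_eq_card_neighbours)
  have w: "abc_weight (n - 1) 1 = \<omega>" "abc_weight 1 (n - 1) = \<omega>"
    unfolding \<omega>_def abc_weight_one abc_weight_commute[of 1] using n by (simp_all add: of_nat_diff)
  have \<omega>_pos: "\<omega> > 0" unfolding \<omega>_def using n by simp
  have eigen: "(\<Sum>j\<in>neighbours n (star_graph n) i.
      abc_weight (deg n (star_graph n) i) (deg n (star_graph n) j) * x j) = sqrt (real n - 2) * x i"
    if i: "i < n" for i
  proof (cases "i = 0")
    case True
    have "(\<Sum>j\<in>neighbours n (star_graph n) 0.
        abc_weight (deg n (star_graph n) 0) (deg n (star_graph n) j) * x j) = (\<Sum>j\<in>{1..<n}. \<omega> * \<omega>)"
      unfolding star_neighbours(1) deg0 using deg w by (intro sum.cong) (auto simp: x_def)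
    also have "\<dots> = (real n - 1) * ((real n - 2) / (real n - 1))"
      using n unfolding \<omega>_def by (simp add: of_nat_diff)
    also have "\<dots> = sqrt (real n - 2) * sqrt (real n - 2)" using n by simp
    finally show ?thesis using True by (simp add: x_def)
  next
    case False
    then have i1: "1 \<le> i" by simp
    show ?thesis
      using w False unfolding star_neighbours(2)[OF i1 i] deg[OF i1 i] by (simp add: x_def deg0)
  qed
  show ?thesis
  proof (rule rho_abc_eq_positive_eigenvector[where x = x])
    show "\<forall>i<n. x i > 0" using n \<omega>_pos by (simp add: x_def)
  qed (use n eigen in auto)
qed

definition double_star_coeff :: "nat \<Rightarrow> real" where
  "double_star_coeff n = (real n - 3)\<^sup>2 / (real n - 2)"

text \<open>The largest root \<open>t\<close> of \<open>t\<^sup>2 - (1 + A) t + A / 2 = 0\<close>, \<open>A = (n - 3)\<^sup>2 / (n - 2)\<close>, which is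
  the equation for \<open>\<rho>\<^sup>2\<close> obtained from the eigenvalue equations of \<open>S\<^sub>n\<^sub>-\<^sub>3\<^sub>,\<^sub>1\<close>.\<close>
definition double_star_sq :: "nat \<Rightarrow> real" where
  "double_star_sq n = (1 + double_star_coeff n + sqrt (1 + (double_star_coeff n)\<^sup>2)) / 2"

lemma double_star_coeff_eq: "2 < n \<Longrightarrow> double_star_coeff n = real n - 4 + 1 / (real n - 2)"
  unfolding double_star_coeff_def by (simp add: field_simps power2_eq_square)

lemma double_star_sq_gt: "double_star_coeff n + 1 / 2 < double_star_sq n"
proof -
  have "double_star_coeff n < sqrt (1 + (double_star_coeff n)\<^sup>2)" by (rule real_less_rsqrt) simp
  then show ?thesis unfolding double_star_sq_def by simp
qed

lemma double_star_sq_gt_half: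
  assumes "3 \<le> n"
  shows "double_star_sq n > 1 / 2"
proof -
  have "double_star_coeff n \<ge> 0" unfolding double_star_coeff_def using assms by simp
  then show ?thesis using double_star_sq_gt[of n] by linarith
qed

lemma double_star_sq_root:
  "(double_star_sq n)\<^sup>2 - (1 + double_star_coeff n) * double_star_sq n + double_star_coeff n / 2 = 0"
proof -
  have "(sqrt (1 + (double_star_coeff n)\<^sup>2))\<^sup>2 = 1 + (double_star_coeff n)\<^sup>2" by simp
  then show ?thesis unfolding double_star_sq_def by (simp add: power2_eq_square field_simps)
qed

lemma double_star_neighbours:
  assumes "4 \<le> n"
  shows "neighbours n (double_star_graph n) 0 = insert 1 {2..n - 2}"
    "neighbours n (double_star_graph n) 1 = {0, n - 1}"
    "neighbours n (double_star_graph n) (n - 1) = {1}"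
    "2 \<le> i \<Longrightarrow> i \<le> n - 2 \<Longrightarrow> neighbours n (double_star_graph n) i = {0}"
  using assms unfolding neighbours_def double_star_graph_def by auto

lemma double_star_deg:
  assumes "4 \<le> n"
  shows "deg n (double_star_graph n) 0 = n - 2" "deg n (double_star_graph n) 1 = 2"
    "deg n (double_star_graph n) (n - 1) = 1"
    "2 \<le> i \<Longrightarrow> i \<le> n - 2 \<Longrightarrow> deg n (double_star_graph n) i = 1"
  using assms unfolding deg_eq_card_neighbours double_star_neighbours[OF assms] by auto

lemma double_star_abc_weight:
  assumes n: "4 \<le> n"
  shows "abc_weight (n - 2) 2 = sqrt (1 / 2)" "abc_weight 2 (n - 2) = sqrt (1 / 2)"
    "abc_weight 2 1 = sqrt (1 / 2)" "abc_weight 1 2 = sqrt (1 / 2)"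
    "abc_weight (n - 2) 1 = sqrt ((real n - 3) / (real n - 2))"
    "abc_weight 1 (n - 2) = sqrt ((real n - 3) / (real n - 2))"
  using n unfolding abc_weight_commute[of _ 2] abc_weight_commute[of 1] abc_weight_one
  by (simp_all add: abc_weight_two of_nat_diff)

text \<open>The Perron vector of \<open>S\<^sub>n\<^sub>-\<^sub>3\<^sub>,\<^sub>1\<close> (centre \<open>0\<close>, its neighbour \<open>1\<close> of degree \<open>2\<close>, the leaf
  \<open>n - 1\<close> at \<open>1\<close>, the leaves \<open>2, \<dots>, n - 2\<close> at \<open>0\<close>), scaled by \<open>\<surd>t\<close> to avoid division.\<close>
definition double_star_vector :: "nat \<Rightarrow> nat \<Rightarrow> real" where
  "double_star_vector n j =
    (if j = 0 then sqrt (double_star_sq n) * (double_star_sq n - 1 / 2)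
     else if j = 1 then sqrt (1 / 2) * double_star_sq n
     else if j = n - 1 then sqrt (double_star_sq n) / 2
     else sqrt ((real n - 3) / (real n - 2)) * (double_star_sq n - 1 / 2))"

lemma double_star_vector_pos: "4 \<le> n \<Longrightarrow> double_star_vector n i > 0"
  using double_star_sq_gt_half[of n] by (simp add: double_star_vector_def)

text \<open>The centre row holds because \<open>t\<close> solves the quadratic equation.\<close>
lemma double_star_vector_centre:
  assumes n: "4 \<le> n"
  defines "G \<equiv> double_star_graph n" and "x \<equiv> double_star_vector n" and "t \<equiv> double_star_sq n"
  shows "(\<Sum>j\<in>neighbours n G 0. abc_weight (deg n G 0) (deg n G j) * x j) = sqrt t * x 0"
proof -
  define \<alpha> where "\<alpha> = sqrt ((real n - 3) / (real n - 2))"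
  have \<alpha>: "(real n - 3) * (\<alpha> * \<alpha>) = double_star_coeff n"
    unfolding \<alpha>_def double_star_coeff_def using n by (auto simp: power2_eq_square)
  have "(\<Sum>j\<in>{2..n - 2}. abc_weight (n - 2) (deg n G j) * x j) = (\<Sum>j\<in>{2..n - 2}. \<alpha> * (\<alpha> * (t - 1 / 2)))"
  proof (intro sum.cong refl)
    fix j assume "j \<in> {2..n - 2}"
    then have "deg n G j = 1" "j \<noteq> 0" "j \<noteq> 1" "j \<noteq> n - 1"
      using double_star_deg(4)[OF n] unfolding G_def by auto
    then show "abc_weight (n - 2) (deg n G j) * x j = \<alpha> * (\<alpha> * (t - 1 / 2))"
      using double_star_abc_weight[OF n] by (simp add: x_def t_def \<alpha>_def double_star_vector_def)
  qed
  also have "\<dots> = ((real n - 3) * (\<alpha> * \<alpha>)) * (t - 1 / 2)"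
    using n by (simp add: of_nat_diff mult.assoc)
  finally have leaves: "(\<Sum>j\<in>{2..n - 2}. abc_weight (n - 2) (deg n G j) * x j)
      = double_star_coeff n * (t - 1 / 2)"
    unfolding \<alpha> .
  have "(\<Sum>j\<in>neighbours n G 0. abc_weight (deg n G 0) (deg n G j) * x j)
      = abc_weight (n - 2) (deg n G 1) * x 1 + (\<Sum>j\<in>{2..n - 2}. abc_weight (n - 2) (deg n G j) * x j)"
    unfolding G_def double_star_neighbours(1)[OF n] double_star_deg(1)[OF n] by simp
  also have "\<dots> = t / 2 + double_star_coeff n * (t - 1 / 2)"
    unfolding leaves double_star_deg(2)[OF n, folded G_def] double_star_abc_weight(1)[OF n]
    by (simp add: x_def t_def double_star_vector_def flip: mult.assoc)
  also have "\<dots> = t * (t - 1 / 2)"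
    using double_star_sq_root[of n] unfolding t_def power2_eq_square by (simp add: algebra_simps)
  also have "\<dots> = sqrt t * x 0"
    using double_star_sq_gt_half[of n] n by (simp add: x_def t_def double_star_vector_def flip: mult.assoc)
  finally show ?thesis .
qed

lemma double_star_vector_eigen:
  assumes n: "4 \<le> n" and i: "i < n"
  defines "G \<equiv> double_star_graph n" and "x \<equiv> double_star_vector n" and "t \<equiv> double_star_sq n"
  shows "(\<Sum>j\<in>neighbours n G i. abc_weight (deg n G i) (deg n G j) * x j) = sqrt t * x i"
proof -
  have ends: "n - 1 \<noteq> 0" "n - 1 \<noteq> 1" "(1::nat) \<noteq> 0" using n by auto
  have t: "sqrt t * sqrt t = t" using double_star_sq_gt_half[of n] n unfolding t_def by simp
  note w = double_star_abc_weight[OF n]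
  consider "i = 0" | "i = 1" | "i = n - 1" | "2 \<le> i \<and> i \<le> n - 2" using i by linarith
  then show ?thesis
  proof cases
    case 1
    then show ?thesis using double_star_vector_centre[OF n] unfolding G_def x_def t_def by simp
  next
    case 2
    have pair: "(\<Sum>j\<in>{0, n - 1}. f j) = f 0 + f (n - 1)" for f :: "nat \<Rightarrow> real"
      using ends by simp
    show ?thesis
      unfolding 2 G_def double_star_neighbours(2)[OF n] pair double_star_deg(1-3)[OF n] w
      using ends by (simp add: x_def t_def double_star_vector_def algebra_simps)
  next
    case 3
    have single: "(\<Sum>j\<in>{1}. f j) = f 1" for f :: "nat \<Rightarrow> real" by simp
    show ?thesis
      unfolding 3 G_def double_star_neighbours(3)[OF n] single double_star_deg(2,3)[OF n] w
      using ends t by (simp add: x_def t_def double_star_vector_def flip: mult.assoc)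
  next
    case 4
    then have mid: "2 \<le> i" "i \<le> n - 2" by auto
    then have "i \<noteq> 0" "i \<noteq> 1" "i \<noteq> n - 1" using n by auto
    have single: "(\<Sum>j\<in>{0}. f j) = f 0" for f :: "nat \<Rightarrow> real" by simp
    show ?thesis
      unfolding G_def double_star_neighbours(4)[OF n mid] single double_star_deg(4)[OF n mid]
        double_star_deg(1)[OF n] w
      using \<open>i \<noteq> 0\<close> \<open>i \<noteq> 1\<close> \<open>i \<noteq> n - 1\<close>
      by (simp add: x_def t_def double_star_vector_def algebra_simps)
  qed
qed

lemma rho_abc_double_star:
  assumes n: "4 \<le> n"
  shows "rho_abc n (double_star_graph n) = sqrt (double_star_sq n)"
  using n double_star_vector_pos[OF n] double_star_vector_eigen[OF n]
  by (intro rho_abc_eq_positive_eigenvector[where x = "double_star_vector n"]) auto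

lemma double_star_sq_less:
  assumes n: "4 \<le> n"
  shows "double_star_sq n < real n - 2"
proof -
  let ?A = "double_star_coeff n"
  have "0 < 1 / (real n - 2)" "1 / (real n - 2) < 1" using n by (auto simp: field_simps)
  then have A: "0 \<le> ?A" "?A < real n - 3" using n double_star_coeff_eq[of n] by auto
  have "(2 * real n - 5) * (2 * real n - 5 - 2 * ?A) > 3 * 1"
    using A n by (intro mult_le_less_imp_less) auto
  then have "1 + ?A\<^sup>2 < (2 * real n - 5 - ?A)\<^sup>2" by (simp add: power2_eq_square algebra_simps)
  then have "sqrt (1 + ?A\<^sup>2) < sqrt ((2 * real n - 5 - ?A)\<^sup>2)" by (rule real_sqrt_less_mono)
  also have "\<dots> = 2 * real n - 5 - ?A" using A n by simp
  finally have "sqrt (1 + ?A\<^sup>2) < 2 * real n - 5 - ?A" .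
  then show ?thesis unfolding double_star_sq_def by simp
qed

section \<open>Trees other than the star and the double star\<close>

lemma double_star_sq_gt_row_bound:
  assumes n: "6 \<le> n"
  shows "real n - 4 + 2 / (real n - 3) < double_star_sq n"
proof -
  have "(real n - 6) * (real n - 1) \<ge> 0" using n by simp
  then have "2 / (real n - 3) \<le> 1 / (real n - 2) + 1 / 2" using n by (simp add: field_simps)
  then show ?thesis using double_star_sq_gt[of n] double_star_coeff_eq[of n] n by simp
qed

lemma double_star_sq_5: "double_star_sq 5 = 2"
proof -
  have "sqrt (1 + (4 / 3)\<^sup>2) = (5 / 3 :: real)" by (rule real_sqrt_unique) (auto simp: power2_eq_square)
  then show ?thesis unfolding double_star_sq_def double_star_coeff_def by simp
qed

text \<open>For \<open>S = n - 1\<close> the left side is \<open>d - 2 + (n - 1) / d\<close>, convex in \<open>d\<close>; on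
  \<open>2 \<le> d \<le> n - 3\<close> its maximum is at \<open>d = n - 3\<close>.\<close>
lemma neighbour_degree_ratio_le:
  fixes S :: real and n d :: nat
  assumes n: "6 \<le> n" and d: "1 \<le> d" "d \<le> n - 3"
    and S: "S \<le> real n - 1" "S \<le> real d * (real n - 3)"
  shows "(real d * (real d - 2) + S) / real d \<le> real n - 4 + 2 / (real n - 3)"
proof (cases "d = 1")
  case True
  have "0 \<le> 2 / (real n - 3)" using n by simp
  moreover have "(real d * (real d - 2) + S) / real d = S - 1" using True by simp
  moreover have "S \<le> real n - 3" using S(2) True by simp
  ultimately show ?thesis by linarith
next
  case False
  then have d2: "real d \<ge> 2" using d by simp
  have dn: "real d \<le> real n - 3" using d n by (simp add: of_nat_diff)
  have "real d * (real n - 3) \<ge> 2 * (real n - 3)" using d2 n by (intro mult_right_mono) auto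
  then have "real d * (real n - 3) - (real n - 1) \<ge> 0" using n by simp
  then have "(real n - 3 - real d) * (real d * (real n - 3) - (real n - 1)) \<ge> 0"
    using dn by simp
  then have "(real d * (real d - 2) + (real n - 1)) * (real n - 3)
      \<le> ((real n - 4) * (real n - 3) + 2) * real d"
    by (simp add: algebra_simps)
  then have "(real d * (real d - 2) + (real n - 1)) / real d \<le> real n - 4 + 2 / (real n - 3)"
    using n d2 by (simp add: field_simps)
  moreover have "(real d * (real d - 2) + S) / real d \<le> (real d * (real d - 2) + (real n - 1)) / real d"
    using S d2 by (intro divide_right_mono) auto
  ultimately show ?thesis by linarith
qed

lemma abc_eigenvalue_sq_le_tree:
  assumes tr: "is_tree n E" and n: "6 \<le> n" and deg_le: "\<forall>i<n. deg n E i \<le> n - 3"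
    and eig: "eigenvalue (abc_matrix n E) k"
  shows "k\<^sup>2 \<le> real n - 4 + 2 / (real n - 3)"
proof (rule eigenvalue_sq_le_neighbour_bound)
  have sg: "simple_graph n E" using tr unfolding is_tree_def by simp
  show "symp E" by (rule simple_graph_symp[OF sg])
  show "eigenvalue (mat n n (abc_entry n E)) k" using eig unfolding abc_matrix_eq .
  show "\<forall>i<n. \<forall>j<n. \<not> E i j \<longrightarrow> abc_entry n E (i, j) = 0" unfolding abc_entry_def by simp
  have deg_pos: "deg n E i \<ge> 1" if "i < n" for i using tree_deg_pos[OF tr _ that] n by simp
  show "\<forall>i<n. (\<Sum>j\<in>neighbours n E i. (abc_entry n E (i, j))\<^sup>2 * deg n E j)
      \<le> real n - 4 + 2 / (real n - 3)"
  proof (intro allI impI)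
    fix i assume i: "i < n"
    let ?d = "deg n E i" and ?S = "\<Sum>j\<in>neighbours n E i. real (deg n E j)"
    have "(\<Sum>j\<in>neighbours n E i. (abc_entry n E (i, j))\<^sup>2 * deg n E j)
        = (\<Sum>j\<in>neighbours n E i. (real ?d + real (deg n E j) - 2) / real ?d)"
    proof (intro sum.cong refl)
      fix j assume "j \<in> neighbours n E i"
      then have "E i j" "j < n" unfolding neighbours_def by auto
      then show "(abc_entry n E (i, j))\<^sup>2 * deg n E j = (real ?d + real (deg n E j) - 2) / real ?d"
        using abc_weight_sq_mult[OF deg_pos[OF i] deg_pos[OF \<open>j < n\<close>]] by (simp add: abc_entry_def)
    qed
    also have "\<dots> = (\<Sum>j\<in>neighbours n E i. (real ?d - 2) + real (deg n E j)) / real ?d"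
      by (simp add: sum_divide_distrib algebra_simps)
    also have "\<dots> = (real ?d * (real ?d - 2) + ?S) / real ?d"
      by (simp add: sum.distrib deg_eq_card_neighbours)
    also have "\<dots> \<le> real n - 4 + 2 / (real n - 3)"
    proof (rule neighbour_degree_ratio_le[OF n deg_pos[OF i] deg_le[rule_format, OF i]])
      have "(\<Sum>j\<in>neighbours n E i. deg n E j) \<le> n - 1" by (rule tree_sum_neighbour_deg[OF tr])
      then show "?S \<le> real n - 1" using n by (simp add: of_nat_diff flip: of_nat_sum)
      have "?S \<le> (\<Sum>j\<in>neighbours n E i. real n - 3)"
        using deg_le n unfolding neighbours_def by (intro sum_mono) (auto simp: of_nat_diff)
      then show "?S \<le> real ?d * (real n - 3)" by (simp add: deg_eq_card_neighbours)
    qed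
    finally show "(\<Sum>j\<in>neighbours n E i. (abc_entry n E (i, j))\<^sup>2 * deg n E j)
        \<le> real n - 4 + 2 / (real n - 3)" .
  qed
qed

text \<open>For \<open>n \<ge> 3\<close> no edge joins two leaves.\<close>
lemma tree_max_deg_2_abc_weight:
  assumes tr: "is_tree n E" and n: "3 \<le> n" and deg_le: "\<forall>i<n. deg n E i \<le> 2" and e: "E i j"
  shows "abc_weight (deg n E i) (deg n E j) = sqrt (1 / 2)"
proof (rule abc_weight_path)
  have sg: "simple_graph n E" using tr unfolding is_tree_def by simp
  have "deg n E i \<in> {1, 2}" if "i < n" for i
  proof -
    have "1 \<le> deg n E i" "deg n E i \<le> 2" using tree_deg_pos[OF tr _ that] deg_le that n by auto
    then show ?thesis by (cases "deg n E i = 1") auto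
  qed
  then show "deg n E i \<in> {1, 2}" "deg n E j \<in> {1, 2}" using simple_graphD[OF sg e] by auto
  show "\<not> (deg n E i = 1 \<and> deg n E j = 1)" using tree_leaf_not_adjacent_leaf[OF tr n e] by blast
qed

text \<open>The row sums \<open>d\<^sub>i \<surd>(1/2)\<close> are at most \<open>\<surd>2\<close>, and smaller at a leaf.\<close>
lemma abc_eigenvalue_abs_less_path:
  assumes tr: "is_tree n E" and n: "3 \<le> n" and deg_le: "\<forall>i<n. deg n E i \<le> 2"
    and eig: "eigenvalue (abc_matrix n E) k"
  shows "\<bar>k\<bar> < sqrt 2"
proof -
  have sg: "simple_graph n E" using tr unfolding is_tree_def by simp
  note weight = tree_max_deg_2_abc_weight[OF tr n deg_le]
  have row: "(\<Sum>j<n. abc_entry n E (i, j) * 1) = deg n E i * sqrt (1 / 2)" for i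
  proof -
    have "(\<Sum>j<n. abc_entry n E (i, j) * 1)
        = (\<Sum>j\<in>neighbours n E i. abc_weight (deg n E i) (deg n E j) * 1)"
      by (rule abc_row_sum)
    also have "\<dots> = (\<Sum>j\<in>neighbours n E i. sqrt (1 / 2))"
      using weight by (intro sum.cong refl) (simp add: neighbours_def)
    finally show ?thesis by (simp add: deg_eq_card_neighbours)
  qed
  have sqrt2: "2 * sqrt (1 / 2) = sqrt (2 :: real)"
  proof -
    have "2 * sqrt (1 / 2 :: real) = (sqrt 2 * sqrt 2) * (1 / sqrt 2)" by (simp add: real_sqrt_divide)
    also have "\<dots> = sqrt 2" by (simp del: real_sqrt_mult_self)
    finally show ?thesis .
  qed
  obtain i0 where i0: "i0 < n" "deg n E i0 = 1" using tree_ex_leaf[OF tr] n by auto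
  have support: "i < n \<and> j < n \<and> abc_entry n E (i, j) > 0" if "E i j" for i j
    using weight[OF that] simple_graphD(1,2)[OF sg that] that by (simp add: abc_entry_def)
  have connect: "(\<lambda>i j. i < n \<and> j < n \<and> abc_entry n E (i, j) > 0)\<^sup>*\<^sup>* a b" if "E\<^sup>*\<^sup>* a b" for a b
    using that
  proof (induction rule: rtranclp_induct)
    case (step b c)
    then show ?case using support[OF step(2)] by (simp add: rtranclp.rtrancl_into_rtrancl)
  qed simp
  show ?thesis
  proof (rule eigenvalue_abs_less_subinvariant[of n "abc_entry n E" "\<lambda>_. 1"])
    show "\<forall>i<n. (\<Sum>j<n. abc_entry n E (i, j) * 1) \<le> sqrt 2 * 1"
    proof (intro allI impI)
      fix i assume "i < n"
      then have "real (deg n E i) * sqrt (1 / 2) \<le> 2 * sqrt (1 / 2)"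
        using deg_le by (intro mult_right_mono) auto
      then show "(\<Sum>j<n. abc_entry n E (i, j) * 1) \<le> sqrt 2 * 1" unfolding row sqrt2 by simp
    qed
    show "(\<Sum>j<n. abc_entry n E (i0, j) * 1) < sqrt 2 * 1"
      unfolding row i0(2) by (simp add: real_sqrt_less_mono)
    show "graph_connected n (\<lambda>i j. i < n \<and> j < n \<and> abc_entry n E (i, j) > 0)"
      using tr connect unfolding is_tree_def graph_connected_def by blast
    show "eigenvalue (mat n n (abc_entry n E)) k" using eig unfolding abc_matrix_eq .
  qed (use i0(1) abc_entry_nonneg in auto)
qed

lemma rho_abc_tree_less_double_star:
  assumes tr: "is_tree n E" and n: "4 \<le> n" and deg_le: "\<forall>i<n. deg n E i \<le> n - 3"
  shows "rho_abc n E < sqrt (double_star_sq n)"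
proof (rule rho_abc_less)
  show "symp E" using tr simple_graph_symp unfolding is_tree_def by blast
  have "n \<noteq> 4"
  proof
    assume "n = 4"
    then obtain i where "i < n" "2 \<le> deg n E i" using tree_ex_deg_ge_2[OF tr] by auto
    then show False using deg_le \<open>n = 4\<close> by fastforce
  qed
  then have n5: "5 \<le> n" using n by simp
  fix k assume eig: "eigenvalue (abc_matrix n E) k"
  show "k < sqrt (double_star_sq n)"
  proof (cases "n = 5")
    case True
    then have "\<bar>k\<bar> < sqrt 2" using abc_eigenvalue_abs_less_path[OF tr _ _ eig] deg_le by simp
    then show ?thesis using True double_star_sq_5 by simp
  next
    case False
    then have n6: "6 \<le> n" using n5 by simp
    have "k\<^sup>2 \<le> real n - 4 + 2 / (real n - 3)" by (rule abc_eigenvalue_sq_le_tree[OF tr n6 deg_le eig])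
    also have "\<dots> < double_star_sq n" by (rule double_star_sq_gt_row_bound[OF n6])
    finally show ?thesis by (rule real_less_rsqrt)
  qed
qed (use n in simp)

lemma tree_deg_le_if_not_iso:
  assumes n: "4 \<le> n" and tr: "is_tree n E" and "i < n"
    and "\<not> graph_iso n E (star_graph n)" "\<not> graph_iso n E (double_star_graph n)"
  shows "deg n E i \<le> n - 3"
proof -
  have "deg n E i \<le> n - 1" using simple_graph_deg_le tr \<open>i < n\<close> unfolding is_tree_def by blast
  moreover have "deg n E i \<noteq> n - 1" using tree_iso_star[OF tr \<open>i < n\<close>] assms(4) by blast
  moreover have "deg n E i \<noteq> n - 2" using tree_iso_double_star[OF tr n \<open>i < n\<close>] assms(5) by blast
  ultimately show ?thesis by linarith
qed

theorem theorem3p1: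
  fixes n :: nat and E :: "nat \<Rightarrow> nat \<Rightarrow> bool"
  assumes "n \<ge> 4"
    and "is_tree n E"
    and "\<not> graph_iso n E (star_graph n)"
    and "\<not> graph_iso n E (double_star_graph n)"
  shows "rho_abc n E < rho_abc n (double_star_graph n) \<and>
         rho_abc n (double_star_graph n) < rho_abc n (star_graph n)"
proof -
  have "\<forall>i<n. deg n E i \<le> n - 3" using tree_deg_le_if_not_iso assms by blast
  then have "rho_abc n E < sqrt (double_star_sq n)"
    using rho_abc_tree_less_double_star assms(1,2) by blast
  moreover have "sqrt (double_star_sq n) < sqrt (real n - 2)"
    using double_star_sq_less[OF assms(1)] by simp
  ultimately show ?thesis using rho_abc_double_star[OF assms(1)] rho_abc_star assms(1) by simp
qed

end
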